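(* Under the assumptions of the following setting, the solution $(S_t,Q_t)$ of the deterministic delayed system \[ S_t'=\big[\alpha-k\sigma(Q_t)\big]S_t,\qquad Q_t'=d-mQ_t-k\sigma(Q_t)S_t+k\,b\,e^{-\mu\zeta}\sigma(Q_{t-\zeta})S_{t-\zeta},\quad t\ge0, \] with continuous initial functions $(S_{0,t},Q_{0,t})$ on $[-\zeta,0]$ satisfies, for some constant $c>0$ and all $t\ge0$, \[ |(S_t,Q_t)-E_0|\le c\,e^{-\eta t},\qquad E_0=(0,d/m),\quad\eta=\gamma\wedge\tfrac m2, \] where $\gamma=kd/m-\alpha$. Assumptions: $\gamma>0$, $M>d/m$, and for all $t\in[-\zeta,0]$: (i) $(S_{0,t},Q_{0,t})\in[0,M]\times[d/m,M]$; (ii) $b\,e^{-\mu\zeta}Q_{0,t}S_{0,t}>\frac dm S_{0,0}$ and $b\,e^{-\mu\zeta}>1$; (iii) $S_{0,t}<\frac{mM-d}{kbe^{-\mu\zeta}M}$.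
   Context: Parameters $\alpha,k,d,m,b,\mu,\zeta,M$ are positive constants. $\sigma:\mathbb R_+\to\mathbb R_+$ is a $C^\infty$ function with $\sigma(x)=x$ for $0\le x\le M$, $\sigma(x)=M+1$ for $x>M+1$, and $0\le\sigma'(x)\le C$ for some constant $C>1$. $|\cdot|$ is the Euclidean norm. *)

theory Defs
  imports "HOL-Analysis.Analysis"
begin

definition smooth_fun :: "(real \<Rightarrow> real) \<Rightarrow> bool" where
  "smooth_fun f \<longleftrightarrow> (\<forall>n x. ((deriv ^^ n) f) differentiable (at x))"

end

theory Submission
  imports Defs
begin

text \<open>
  (1) Invariance: \<open>S > 0\<close> (it solves a linear equation) and \<open>Q \<ge> q\<close> for \<open>t \<ge> 0\<close>.  The latter is a
      first-crossing argument: while \<open>Q \<ge> q\<close> we have \<open>\<sigma>(Q) \<ge> q\<close>, so \<open>S\<close> is nonincreasing; hence at a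
      first time \<open>T\<close> with \<open>Q T = q\<close> the delayed input \<open>\<beta> \<sigma>(Q(T-\<zeta>)) S(T-\<zeta>)\<close> exceeds the loss
      \<open>q S T\<close> (by the initial condition if \<open>T \<le> \<zeta>\<close>, by \<open>\<beta> > 1\<close> otherwise), so \<open>Q' T > 0\<close>.
  (2) Decay of \<open>S\<close>: \<open>Q \<ge> q\<close> gives \<open>S' \<le> -\<gamma> S\<close>, hence \<open>S t \<le> S 0 exp(-\<gamma> t)\<close>.
  (3) Decay of \<open>Q - q\<close>: the delayed term decays like \<open>exp(-\<gamma> t)\<close>, so
      \<open>(Q - q)' \<le> -m (Q - q) + B exp(-\<eta> t)\<close> with \<open>\<eta> = min \<gamma> (m/2)\<close>, and comparison gives \<open>O(exp(-\<eta> t))\<close>.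
\<close>

text \<open>Comparison with exponential decay: \<open>f' \<le> -r f\<close> on \<open>(s, t)\<close> forces \<open>f t \<le> f s exp(-r (t - s))\<close>,
  since \<open>f exp(r x)\<close> is nonincreasing.\<close>
lemma exp_decay_comparison:
  fixes f f' :: "real \<Rightarrow> real" and r s t :: real
  assumes "s \<le> t"
    and der: "\<And>x. x \<in> {s..t} \<Longrightarrow> (f has_real_derivative f' x) (at x within {s..t})"
    and ineq: "\<And>x. s < x \<Longrightarrow> x < t \<Longrightarrow> f' x \<le> - r * f x"
  shows "f t \<le> f s * exp (- r * (t - s))"
proof -
  define g where "g x = f x * exp (r * x)" for x
  have dg: "(g has_real_derivative (f' x + r * f x) * exp (r * x)) (at x within {s..t})"
    if "x \<in> {s..t}" for x
    unfolding g_def using der[OF that]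
    by (auto intro!: derivative_eq_intros simp: algebra_simps)
  have "g t \<le> g s"
  proof (rule DERIV_nonpos_imp_decreasing_open[OF \<open>s \<le> t\<close>])
    fix x assume x: "s < x" "x < t"
    have "(g has_real_derivative (f' x + r * f x) * exp (r * x)) (at x)"
      using dg[of x] x at_within_Icc_at[OF x] by simp
    moreover have "(f' x + r * f x) * exp (r * x) \<le> 0"
      using ineq[OF x] by (simp add: mult_nonpos_nonneg)
    ultimately show "\<exists>y. DERIV g x :> y \<and> y \<le> 0" by blast
  next
    show "continuous_on {s..t} g" using dg by (rule DERIV_continuous_on)
  qed
  then have "f t \<le> f s * exp (r * s) / exp (r * t)"
    unfolding g_def by (simp add: pos_le_divide_eq)
  also have "\<dots> = f s * exp (- r * (t - s))"
    by (simp add: algebra_simps exp_diff)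
  finally show ?thesis .
qed

text \<open>Subtracting the particular solution \<open>B/(r-\<eta>) exp(-\<eta> x)\<close>
  reduces this to the unforced comparison.\<close>
lemma forced_exp_decay:
  fixes f f' :: "real \<Rightarrow> real" and r \<eta> B t :: real
  assumes "0 \<le> t" "\<eta> < r" "0 \<le> B"
    and der: "\<And>x. 0 \<le> x \<Longrightarrow> (f has_real_derivative f' x) (at x within {0..})"
    and ineq: "\<And>x. 0 < x \<Longrightarrow> f' x \<le> - r * f x + B * exp (- \<eta> * x)"
  shows "f t \<le> (\<bar>f 0\<bar> + B / (r - \<eta>)) * exp (- \<eta> * t)"
proof -
  define c where "c = B / (r - \<eta>)"
  have c: "0 \<le> c" "B = (r - \<eta>) * c"
    using assms(2,3) unfolding c_def by auto
  define g where "g x = f x - c * exp (- \<eta> * x)" for x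
  have dg: "(g has_real_derivative f' x + c * \<eta> * exp (- \<eta> * x)) (at x within {0..t})"
    if "x \<in> {0..t}" for x
  proof -
    have "(f has_real_derivative f' x) (at x within {0..t})"
      using der[of x] that by (auto intro: has_field_derivative_subset)
    then show ?thesis
      unfolding g_def by (auto intro!: derivative_eq_intros)
  qed
  have "g t \<le> g 0 * exp (- r * (t - 0))"
  proof (rule exp_decay_comparison[OF \<open>0 \<le> t\<close> dg])
    fix x :: real assume "0 < x" "x < t"
    then show "f' x + c * \<eta> * exp (- \<eta> * x) \<le> - r * g x"
      using ineq[of x] c(2) unfolding g_def by (simp add: algebra_simps)
  qed simp
  moreover have "g 0 * exp (- r * t) \<le> \<bar>f 0\<bar> * exp (- \<eta> * t)"
  proof (cases "g 0 \<le> 0")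
    case True
    then show ?thesis
      by (meson abs_ge_zero exp_ge_zero mult_nonneg_nonneg mult_nonpos_nonneg order_trans)
  next
    case False
    have "g 0 * exp (- r * t) \<le> g 0 * exp (- \<eta> * t)"
      using False assms(1,2) by (simp add: mult_right_mono)
    also have "\<dots> \<le> \<bar>f 0\<bar> * exp (- \<eta> * t)"
      using c(1) unfolding g_def by (intro mult_right_mono) auto
    finally show ?thesis .
  qed
  ultimately show ?thesis
    unfolding g_def c_def by (simp add: algebra_simps)
qed

text \<open>A solution of a linear equation \<open>f' = a f\<close> with continuous \<open>a\<close> keeps the sign of \<open>f 0\<close>:
  \<open>f exp(-\<integral>a)\<close> is constant.\<close>
lemma linear_ode_positive:
  fixes f a :: "real \<Rightarrow> real" and t :: real
  assumes a_cont: "continuous_on {0..} a" and "0 < f 0" "0 \<le> t"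
    and der: "\<And>x. 0 \<le> x \<Longrightarrow> (f has_real_derivative a x * f x) (at x within {0..})"
  shows "0 < f t"
proof -
  define A where "A u = integral {0..u} a" for u
  have dA: "(A has_real_derivative a u) (at u within {0..t})" if "u \<in> {0..t}" for u
    using integral_has_vector_derivative[OF continuous_on_subset[OF a_cont] that]
    unfolding A_def by (auto simp: has_real_derivative_iff_has_vector_derivative)
  have const: "((\<lambda>u. f u * exp (- A u)) has_real_derivative 0) (at u within {0..t})"
    if "u \<in> {0..t}" for u
  proof -
    have "(f has_real_derivative a u * f u) (at u within {0..t})"
      using der[of u] that by (auto intro: has_field_derivative_subset)
    from DERIV_mult[OF this DERIV_chain2[OF DERIV_exp DERIV_minus[OF dA[OF that]]]]
    show ?thesis by (simp add: algebra_simps)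
  qed
  obtain c where c: "\<And>u. u \<in> {0..t} \<Longrightarrow> f u * exp (- A u) = c"
    using has_field_derivative_zero_constant[OF _ const] by auto
  have "f t * exp (- A t) = f 0"
    using c[of t] c[of 0] \<open>0 \<le> t\<close> unfolding A_def by simp
  with \<open>0 < f 0\<close> have "0 < f t * exp (- A t)" by simp
  then show ?thesis by (simp add: zero_less_mult_iff)
qed

text \<open>The first exit time \<open>T = Inf {Q < q}\<close>
  would satisfy \<open>Q T = q\<close>, contradicting \<open>Q > q\<close> just after \<open>T\<close>.\<close>
lemma lower_barrier:
  fixes Q :: "real \<Rightarrow> real" and q t :: real
  assumes cont: "continuous_on {0..} Q" and start: "q \<le> Q 0" and "0 \<le> t"
    and crossing: "\<And>T. 0 \<le> T \<Longrightarrow> Q T = q \<Longrightarrow> (\<And>u. 0 \<le> u \<Longrightarrow> u < T \<Longrightarrow> q \<le> Q u) \<Longrightarrow>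
        \<exists>D>0. (Q has_real_derivative D) (at T within {0..})"
  shows "q \<le> Q t"
proof (rule ccontr)
  assume "\<not> q \<le> Q t"
  define X where "X = {u. 0 \<le> u \<and> Q u < q}"
  define T where "T = Inf X"
  have X: "X \<noteq> {}" "bdd_below X"
    using \<open>0 \<le> t\<close> \<open>\<not> q \<le> Q t\<close> unfolding X_def by (auto intro: bdd_belowI[of _ 0])
  have T_lower: "T \<le> u" if "u \<in> X" for u
    unfolding T_def using that X(2) by (rule cInf_lower)
  have T_nonneg: "0 \<le> T"
    unfolding T_def using X(1) by (rule cInf_greatest) (auto simp: X_def)
  have before: "q \<le> Q u" if "0 \<le> u" "u < T" for u
    using T_lower[of u] that unfolding X_def by force
  \<comment> \<open>At the first exit time the level is hit exactly, by continuity from both sides.\<close>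
  have closed_sub: "closed ({0..} \<inter> Q -` {..q})" "closed ({0..} \<inter> Q -` {q..})"
    by (auto intro: continuous_closed_preimage[OF cont])
  have "T \<in> closure X"
    unfolding T_def using X by (rule closure_contains_Inf)
  also have "closure X \<subseteq> {0..} \<inter> Q -` {..q}"
    by (rule closure_minimal[OF _ closed_sub(1)]) (auto simp: X_def)
  finally have "Q T \<le> q" by simp
  moreover have "q \<le> Q T"
  proof (cases "T = 0")
    case True
    then show ?thesis using start by simp
  next
    case False
    then have "T \<in> closure {0..<T}" using T_nonneg by simp
    also have "closure {0..<T} \<subseteq> {0..} \<inter> Q -` {q..}"
      by (rule closure_minimal[OF _ closed_sub(2)]) (auto intro: before)
    finally show ?thesis by simp
  qed
  ultimately have QT: "Q T = q" by simp
  then obtain D where "0 < D" "(Q has_real_derivative D) (at T within {0..})"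
    using crossing[OF T_nonneg] before by blast
  then obtain \<delta> where \<delta>: "0 < \<delta>" "\<And>h. 0 < h \<Longrightarrow> T + h \<in> {0..} \<Longrightarrow> h < \<delta> \<Longrightarrow> Q T < Q (T + h)"
    using has_real_derivative_pos_inc_right by blast
  have "Inf X < T + \<delta>" using \<delta>(1) unfolding T_def by simp
  then obtain u where u: "u \<in> X" "u < T + \<delta>"
    using cInf_less_iff[OF X] by auto
  moreover have "T < u"
    using T_lower[OF u(1)] u(1) QT unfolding X_def by (cases "T = u") auto
  ultimately have "Q T < Q u"
    using \<delta>(2)[of "u - T"] T_nonneg by simp
  then show False using u(1) QT unfolding X_def by simp
qed

text \<open>The delayed model with \<open>\<beta>\<close> standing for \<open>b exp(-\<mu>\<zeta>)\<close>.\<close>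
locale delayed_feedback_system =
  fixes \<alpha> k d m \<beta> \<zeta> M :: real and \<sigma> S Q :: "real \<Rightarrow> real"
  assumes k_pos: "0 < k" and d_pos: "0 < d" and m_pos: "0 < m" and \<zeta>_pos: "0 < \<zeta>"
    and sigma_cont: "continuous_on UNIV \<sigma>"
    and sigma_mono: "\<And>x y. 0 \<le> x \<Longrightarrow> x \<le> y \<Longrightarrow> \<sigma> x \<le> \<sigma> y"
    and sigma_id: "\<And>x. 0 \<le> x \<Longrightarrow> x \<le> M \<Longrightarrow> \<sigma> x = x"
    and sigma_top: "\<And>x. M + 1 < x \<Longrightarrow> \<sigma> x = M + 1"
    and gamma_pos: "0 < k * d / m - \<alpha>"
    and M_gt: "d / m < M"
    and beta_gt: "1 < \<beta>"
    and init_box: "\<And>t. t \<in> {-\<zeta>..0} \<Longrightarrow> 0 \<le> S t \<and> S t \<le> M \<and> d / m \<le> Q t \<and> Q t \<le> M"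
    and init_growth: "\<And>t. t \<in> {-\<zeta>..0} \<Longrightarrow> d / m * S 0 < \<beta> * Q t * S t"
    and S_eq: "\<And>t. 0 \<le> t \<Longrightarrow>
        (S has_real_derivative (\<alpha> - k * \<sigma> (Q t)) * S t) (at t within {0..})"
    and Q_eq: "\<And>t. 0 \<le> t \<Longrightarrow>
        (Q has_real_derivative d - m * Q t - k * \<sigma> (Q t) * S t + k * \<beta> * \<sigma> (Q (t - \<zeta>)) * S (t - \<zeta>))
          (at t within {0..})"
begin

definition q :: real where "q = d / m"

definition \<gamma> :: real where "\<gamma> = k * d / m - \<alpha>"

lemma q_pos: "0 < q" and q_lt_M: "q < M" and gamma_pos': "0 < \<gamma>"
  and k_q: "\<alpha> - k * q = - \<gamma>" and d_m_q: "d = m * q"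
  using d_pos m_pos M_gt gamma_pos unfolding q_def \<gamma>_def by auto

lemma sigma_ge_q: "q \<le> x \<Longrightarrow> q \<le> \<sigma> x"
  using sigma_mono[of q x] sigma_id[of q] q_pos q_lt_M by simp

lemma sigma_bounds: "0 \<le> x \<Longrightarrow> 0 \<le> \<sigma> x \<and> \<sigma> x \<le> M + 1"
  using sigma_mono[of 0 x] sigma_mono[of x "max x (M + 1) + 1"] sigma_id[of 0]
    sigma_top[of "max x (M + 1) + 1"] q_pos q_lt_M by auto

text \<open>The growth condition at \<open>t = 0\<close> rules out \<open>S 0 = 0\<close>.\<close>
lemma S_init_pos: "0 < S 0"
  using init_growth[of 0] init_box[of 0] \<zeta>_pos d_pos m_pos
  by (cases "S 0 = 0") auto

lemma Q_cont: "continuous_on {0..} Q"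
  by (rule DERIV_continuous_on[OF Q_eq]) simp

lemma S_pos:
  assumes "0 \<le> t" shows "0 < S t"
proof -
  have "continuous_on {0..} (\<lambda>t. \<alpha> - k * \<sigma> (Q t))"
    using continuous_on_compose2[OF sigma_cont Q_cont] by (intro continuous_intros) auto
  then show ?thesis
    using linear_ode_positive[OF _ S_init_pos assms S_eq] by blast
qed

lemma S_nonneg: "- \<zeta> \<le> t \<Longrightarrow> 0 \<le> S t"
  using init_box[of t] S_pos[of t] by (cases "0 \<le> t") auto

text \<open>While \<open>Q \<ge> q\<close>, the growth rate \<open>\<alpha> - k \<sigma>(Q)\<close> is at most \<open>-\<gamma>\<close>.\<close>
lemma S_decay:
  assumes "0 \<le> s" "s \<le> t" and above: "\<And>u. s < u \<Longrightarrow> u < t \<Longrightarrow> q \<le> Q u"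
  shows "S t \<le> S s * exp (- \<gamma> * (t - s))"
proof (rule exp_decay_comparison[OF \<open>s \<le> t\<close>])
  fix x assume "x \<in> {s..t}"
  then show "(S has_real_derivative (\<alpha> - k * \<sigma> (Q x)) * S x) (at x within {s..t})"
    using S_eq[of x] assms(1) by (auto intro: has_field_derivative_subset)
next
  fix x assume x: "s < x" "x < t"
  have "k * q \<le> k * \<sigma> (Q x)"
    using sigma_ge_q[OF above[OF x]] k_pos by simp
  then have "\<alpha> - k * \<sigma> (Q x) \<le> - \<gamma>" using k_q by linarith
  then show "(\<alpha> - k * \<sigma> (Q x)) * S x \<le> - \<gamma> * S x"
    using S_pos[of x] x assms(1) by (intro mult_right_mono) auto
qed

lemma S_nonincreasing:
  assumes "0 \<le> s" "s \<le> t" and above: "\<And>u. s < u \<Longrightarrow> u < t \<Longrightarrow> q \<le> Q u"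
  shows "S t \<le> S s"
proof -
  have "S s * exp (- \<gamma> * (t - s)) \<le> S s * 1"
    using S_pos[OF assms(1)] gamma_pos' assms(2) by (intro mult_left_mono) auto
  with S_decay[OF assms] show ?thesis by simp
qed

lemma delayed_input_exceeds_loss:
  assumes "0 \<le> T" and above: "\<And>u. 0 \<le> u \<Longrightarrow> u < T \<Longrightarrow> q \<le> Q u"
  shows "q * S T < \<beta> * \<sigma> (Q (T - \<zeta>)) * S (T - \<zeta>)"
proof (cases "T \<le> \<zeta>")
  case True
  then have hist: "T - \<zeta> \<in> {-\<zeta>..0}" using \<open>0 \<le> T\<close> by auto
  have "q * S T \<le> q * S 0"
    using S_nonincreasing[OF order_refl \<open>0 \<le> T\<close>] above q_pos by simp
  also have "\<dots> < \<beta> * Q (T - \<zeta>) * S (T - \<zeta>)"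
    using init_growth[OF hist] unfolding q_def by simp
  also have "\<dots> = \<beta> * \<sigma> (Q (T - \<zeta>)) * S (T - \<zeta>)"
    using init_box[OF hist] sigma_id[of "Q (T - \<zeta>)"] q_pos unfolding q_def by auto
  finally show ?thesis .
next
  case False
  then have lag: "0 \<le> T - \<zeta>" "T - \<zeta> < T" using \<zeta>_pos by auto
  have "q * S T \<le> q * S (T - \<zeta>)"
    using S_nonincreasing[OF lag(1)] above lag q_pos by simp
  also have "\<dots> < \<beta> * q * S (T - \<zeta>)"
    using beta_gt q_pos S_pos[OF lag(1)] by simp
  also have "\<dots> \<le> \<beta> * \<sigma> (Q (T - \<zeta>)) * S (T - \<zeta>)"
    using sigma_ge_q[OF above[OF lag]] beta_gt S_pos[OF lag(1)] by simp
  finally show ?thesis .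
qed

text \<open>Invariance of \<open>Q \<ge> q\<close>: at a first crossing \<open>Q' T = k (\<beta> \<sigma>(Q(T-\<zeta>)) S(T-\<zeta>) - q S T) > 0\<close>.\<close>
lemma Q_ge_q:
  assumes "0 \<le> t" shows "q \<le> Q t"
proof (rule lower_barrier[OF Q_cont _ assms])
  show "q \<le> Q 0" using init_box[of 0] \<zeta>_pos unfolding q_def by auto
next
  fix T assume T: "0 \<le> T" "Q T = q" and above: "\<And>u. 0 \<le> u \<Longrightarrow> u < T \<Longrightarrow> q \<le> Q u"
  have "0 < k * (\<beta> * \<sigma> (Q (T - \<zeta>)) * S (T - \<zeta>) - q * S T)"
    using delayed_input_exceeds_loss[OF T(1) above] k_pos by simp
  also have "\<dots> = d - m * Q T - k * \<sigma> (Q T) * S T + k * \<beta> * \<sigma> (Q (T - \<zeta>)) * S (T - \<zeta>)"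
    using T(2) sigma_id[of q] q_pos q_lt_M d_m_q by (simp add: algebra_simps)
  finally show "\<exists>D>0. (Q has_real_derivative D) (at T within {0..})"
    using Q_eq[OF T(1)] by blast
qed

text \<open>With the initial box, \<open>Q \<ge> q\<close> also holds on the history interval, so delayed arguments of \<open>\<sigma>\<close> are nonnegative.\<close>
lemma Q_ge_q_history: "- \<zeta> \<le> t \<Longrightarrow> q \<le> Q t"
  using init_box[of t] Q_ge_q[of t] by (cases "0 \<le> t") (auto simp: q_def)

lemma S_exp_decay: "0 \<le> t \<Longrightarrow> S t \<le> S 0 * exp (- \<gamma> * t)"
  using S_decay[of 0 t] Q_ge_q by simp

lemma S_delayed_bound:
  assumes "0 \<le> t"
  shows "S (t - \<zeta>) \<le> max M (S 0) * exp (\<gamma> * \<zeta>) * exp (- \<gamma> * t)"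
proof -
  have rhs: "max M (S 0) * exp (\<gamma> * \<zeta>) * exp (- \<gamma> * t) = max M (S 0) * exp (\<gamma> * (\<zeta> - t))"
    by (simp add: algebra_simps flip: exp_add)
  show ?thesis
  proof (cases "t \<le> \<zeta>")
    case True
    have "S (t - \<zeta>) \<le> max M (S 0) * 1"
      using init_box[of "t - \<zeta>"] True assms by auto
    also have "\<dots> \<le> max M (S 0) * exp (\<gamma> * (\<zeta> - t))"
      using True gamma_pos' S_init_pos by (intro mult_left_mono) auto
    finally show ?thesis unfolding rhs .
  next
    case False
    then have "S (t - \<zeta>) \<le> S 0 * exp (\<gamma> * (\<zeta> - t))"
      using S_exp_decay[of "t - \<zeta>"] by (simp add: algebra_simps)
    also have "\<dots> \<le> max M (S 0) * exp (\<gamma> * (\<zeta> - t))"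
      by (simp add: mult_right_mono)
    finally show ?thesis unfolding rhs .
  qed
qed

text \<open>The excess \<open>Q - q\<close> obeys \<open>(Q - q)' \<le> -m (Q - q) + B exp(-\<eta> t)\<close>: the loss term is
  nonpositive and the delayed term is bounded using \<open>\<sigma> \<le> M + 1\<close> and the decay of \<open>S\<close>.\<close>
lemma Q_excess_decay:
  fixes \<eta> B :: real
  defines "\<eta> \<equiv> min \<gamma> (m / 2)" and "B \<equiv> k * \<beta> * (M + 1) * (max M (S 0) * exp (\<gamma> * \<zeta>))"
  assumes "0 \<le> t"
  shows "Q t - q \<le> (\<bar>Q 0 - q\<bar> + B / (m - \<eta>)) * exp (- \<eta> * t)"
proof (rule forced_exp_decay[where f = "\<lambda>t. Q t - q", OF assms(3)])
  show "\<eta> < m" "0 \<le> B"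
    unfolding \<eta>_def B_def using m_pos k_pos beta_gt q_pos q_lt_M by auto
next
  fix x :: real assume "0 \<le> x"
  show "((\<lambda>t. Q t - q) has_real_derivative
      d - m * Q x - k * \<sigma> (Q x) * S x + k * \<beta> * \<sigma> (Q (x - \<zeta>)) * S (x - \<zeta>) - 0) (at x within {0..})"
    using Q_eq[OF \<open>0 \<le> x\<close>] by (intro derivative_intros)
next
  fix x :: real assume "0 < x"
  have loss: "0 \<le> k * \<sigma> (Q x) * S x"
    using k_pos sigma_bounds[of "Q x"] Q_ge_q[of x] q_pos S_pos[of x] \<open>0 < x\<close> by simp
  have "\<sigma> (Q (x - \<zeta>)) * S (x - \<zeta>) \<le> (M + 1) * (max M (S 0) * exp (\<gamma> * \<zeta>) * exp (- \<gamma> * x))"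
    using sigma_bounds[of "Q (x - \<zeta>)"] Q_ge_q_history[of "x - \<zeta>"] q_pos
      S_nonneg[of "x - \<zeta>"] S_delayed_bound[of x] \<open>0 < x\<close>
    by (intro mult_mono) auto
  also have "\<dots> \<le> (M + 1) * (max M (S 0) * exp (\<gamma> * \<zeta>) * exp (- \<eta> * x))"
    using \<open>0 < x\<close> q_pos q_lt_M unfolding \<eta>_def by (intro mult_left_mono) auto
  finally have gain: "k * \<beta> * \<sigma> (Q (x - \<zeta>)) * S (x - \<zeta>) \<le> B * exp (- \<eta> * x)"
    using k_pos beta_gt unfolding B_def by (simp add: mult.assoc mult_left_mono)
  show "d - m * Q x - k * \<sigma> (Q x) * S x + k * \<beta> * \<sigma> (Q (x - \<zeta>)) * S (x - \<zeta>) - 0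
      \<le> - m * (Q x - q) + B * exp (- \<eta> * x)"
    using loss gain d_m_q by (simp add: algebra_simps)
qed

theorem converges_to_disease_free_equilibrium:
  "\<exists>c>0. \<forall>t\<ge>0. norm ((S t, Q t) - (0, d / m)) \<le> c * exp (- min (k * d / m - \<alpha>) (m / 2) * t)"
proof -
  define \<eta> where "\<eta> = min \<gamma> (m / 2)"
  define B where "B = k * \<beta> * (M + 1) * (max M (S 0) * exp (\<gamma> * \<zeta>))"
  define c where "c = S 0 + \<bar>Q 0 - q\<bar> + B / (m - \<eta>)"
  have "0 \<le> B / (m - \<eta>)"
    unfolding B_def \<eta>_def using m_pos k_pos beta_gt q_pos q_lt_M by auto
  then have "0 < c" unfolding c_def using S_init_pos by simp
  moreover have "norm ((S t, Q t) - (0, d / m)) \<le> c * exp (- \<eta> * t)" if "0 \<le> t" for t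
  proof -
    have "norm ((S t, Q t) - (0, d / m)) \<le> \<bar>S t\<bar> + \<bar>Q t - q\<bar>"
      using norm_Pair_le[of "S t" "Q t - q"] by (simp add: q_def)
    also have "\<dots> = S t + (Q t - q)"
      using S_pos[OF that] Q_ge_q[OF that] by simp
    also have "\<dots> \<le> S 0 * exp (- \<eta> * t) + (\<bar>Q 0 - q\<bar> + B / (m - \<eta>)) * exp (- \<eta> * t)"
    proof (rule add_mono)
      have "exp (- \<gamma> * t) \<le> exp (- \<eta> * t)"
        using that unfolding \<eta>_def by (simp add: mult_right_mono)
      then show "S t \<le> S 0 * exp (- \<eta> * t)"
        using S_exp_decay[OF that] S_init_pos by (meson less_imp_le mult_left_mono order_trans)
      show "Q t - q \<le> (\<bar>Q 0 - q\<bar> + B / (m - \<eta>)) * exp (- \<eta> * t)"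
        using Q_excess_decay[OF that] unfolding \<eta>_def B_def .
    qed
    finally show ?thesis unfolding c_def by (simp add: algebra_simps)
  qed
  ultimately show ?thesis unfolding \<eta>_def \<gamma>_def by blast
qed

end

lemma smooth_fun_has_derivative:
  assumes "smooth_fun f" shows "(f has_real_derivative deriv f x) (at x)"
  using assms[unfolded smooth_fun_def, rule_format, of 0 x]
  by (simp add: DERIV_deriv_iff_real_differentiable)

theorem mainTheorem7:
  fixes \<alpha> k d m b \<mu> \<zeta> M C :: real
    and \<sigma> S0 Q0 S Q :: "real \<Rightarrow> real"
  assumes pos: "\<alpha> > 0" "k > 0" "d > 0" "m > 0" "b > 0" "\<mu> > 0" "\<zeta> > 0" "M > 0"
    and sigma_smooth: "smooth_fun \<sigma>"
    and sigma_nonneg: "\<And>x. 0 \<le> x \<Longrightarrow> 0 \<le> \<sigma> x"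
    and sigma_id: "\<And>x. 0 \<le> x \<Longrightarrow> x \<le> M \<Longrightarrow> \<sigma> x = x"
    and sigma_top: "\<And>x. x > M + 1 \<Longrightarrow> \<sigma> x = M + 1"
    and C_gt: "C > 1"
    and sigma_deriv: "\<And>x. 0 \<le> x \<Longrightarrow> 0 \<le> deriv \<sigma> x \<and> deriv \<sigma> x \<le> C"
    and gamma_pos: "k * d / m - \<alpha> > 0"
    and M_gt: "M > d / m"
    and init_cont: "continuous_on {-\<zeta>..0} S0" "continuous_on {-\<zeta>..0} Q0"
    and init_box: "\<And>t. t \<in> {-\<zeta>..0} \<Longrightarrow> 0 \<le> S0 t \<and> S0 t \<le> M \<and> d / m \<le> Q0 t \<and> Q0 t \<le> M"
    and init_ii: "\<And>t. t \<in> {-\<zeta>..0} \<Longrightarrow> b * exp (-\<mu>*\<zeta>) * Q0 t * S0 t > d / m * S0 0"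
    and b_exp: "b * exp (-\<mu>*\<zeta>) > 1"
    and init_iii: "\<And>t. t \<in> {-\<zeta>..0} \<Longrightarrow> S0 t < (m*M - d) / (k * b * exp (-\<mu>*\<zeta>) * M)"
    and sol_init: "\<And>t. t \<in> {-\<zeta>..0} \<Longrightarrow> S t = S0 t \<and> Q t = Q0 t"
    and sol_cont: "continuous_on {-\<zeta>..} S" "continuous_on {-\<zeta>..} Q"
    and sol_S: "\<And>t. 0 \<le> t \<Longrightarrow>
        (S has_real_derivative ((\<alpha> - k * \<sigma> (Q t)) * S t)) (at t within {0..})"
    and sol_Q: "\<And>t. 0 \<le> t \<Longrightarrow>
        (Q has_real_derivative (d - m * Q t - k * \<sigma> (Q t) * S t
            + k * b * exp (-\<mu>*\<zeta>) * \<sigma> (Q (t - \<zeta>)) * S (t - \<zeta>))) (at t within {0..})"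
  shows "\<exists>c>0. \<forall>t\<ge>0. norm ((S t, Q t) - (0, d / m))
            \<le> c * exp (- min (k * d / m - \<alpha>) (m / 2) * t)"
proof -
  have sigma_has_deriv: "\<And>x. (\<sigma> has_real_derivative deriv \<sigma> x) (at x)"
    using sigma_smooth by (rule smooth_fun_has_derivative)
  interpret delayed_feedback_system \<alpha> k d m "b * exp (-\<mu>*\<zeta>)" \<zeta> M \<sigma> S Q
  proof unfold_locales
    show "continuous_on UNIV \<sigma>"
      by (rule DERIV_continuous_on[OF sigma_has_deriv])
    show "\<sigma> x \<le> \<sigma> y" if "0 \<le> x" "x \<le> y" for x y
      using that sigma_has_deriv sigma_deriv
      by (intro DERIV_nonneg_imp_nondecreasing[OF \<open>x \<le> y\<close>]) (blast intro: order_trans)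
    show "t \<in> {-\<zeta>..0} \<Longrightarrow> 0 \<le> S t \<and> S t \<le> M \<and> d / m \<le> Q t \<and> Q t \<le> M" for t
      using init_box sol_init by auto
    show "t \<in> {-\<zeta>..0} \<Longrightarrow> d / m * S 0 < b * exp (-\<mu>*\<zeta>) * Q t * S t" for t
      using init_ii[of t] sol_init[of t] sol_init[of 0] pos(7) by auto
    show "(Q has_real_derivative d - m * Q t - k * \<sigma> (Q t) * S t
        + k * (b * exp (-\<mu>*\<zeta>)) * \<sigma> (Q (t - \<zeta>)) * S (t - \<zeta>)) (at t within {0..})"
      if "0 \<le> t" for t
      using sol_Q[OF that] by (simp add: mult.assoc)
  qed (use pos sigma_id sigma_top gamma_pos M_gt b_exp sol_S in auto)
  show ?thesis by (rule converges_to_disease_free_equilibrium)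
qed

end
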